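(* Let $\mathcal{X}$ be a finite set, $\pi$ a probability mass function on $\mathcal{X}$ with $\pi(x)>0$ for all $x$, and let a group $\mathcal{G}$ act on $\mathcal{X}$, with orbits $\mathcal{O}(x)=\{gx:g\in\mathcal{G}\}$. Let $G$, $M$, $B$ be the Gibbs, Metropolis–Hastings and Barker orbit kernels associated with this same action (defined below). If $M$ does not have a deterministic 2-cycle on any of its orbits, then $\lim_{i\to\infty} M^i = G$. Moreover, $\lim_{i\to\infty}B^i=G$.
   Context: The Gibbs orbit kernel is $G(x,y)=\pi(y)/\pi(\mathcal{O}(x))$ if $y\in\mathcal{O}(x)$ and $0$ otherwise, where $\pi(\mathcal{O}(x))=\sum_{z\in\mathcal{O}(x)}\pi(z)$. The Metropolis–Hastings orbit kernel is $M(x,y)=\frac{1}{|\mathcal{O}(x)|-1}\min\{1,\pi(y)/\pi(x)\}$ for $y\in\mathcal{O}(x)$, $y\neq x$; $M(x,y)=0$ for $y\notin\mathcal{O}(x)$; and $M(x,x)=1-\sum_{y\ne x}M(x,y)$ (so $M(x,x)=1$ if $|\mathcal{O}(x)|=1$). The Barker orbit kernel $B$ is defined identically with $\min\{1,\pi(y)/\pi(x)\}$ replaced by $\pi(y)/(\pi(x)+\pi(y))$. Each of these kernels is block diagonal with respect to the orbits. "$M$ has a deterministic 2-cycle on an orbit" means that the block of $M$ on that orbit equals $\begin{pmatrix}0&1\\1&0\end{pmatrix}$. *)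

theory Defs
  imports "HOL-Analysis.Analysis" "HOL-Algebra.Group_Action"
begin

definition gibbs_orbit_kernel ::
  "('g, 'm) monoid_scheme \<Rightarrow> ('g \<Rightarrow> 'b \<Rightarrow> 'b) \<Rightarrow> ('b \<Rightarrow> real) \<Rightarrow> 'b \<Rightarrow> 'b \<Rightarrow> real" where
  "gibbs_orbit_kernel G \<phi> \<pi> x y =
     (if y \<in> orbit G \<phi> x then \<pi> y / (\<Sum>z\<in>orbit G \<phi> x. \<pi> z) else 0)"

definition orbit_kernel_off ::
  "('g, 'm) monoid_scheme \<Rightarrow> ('g \<Rightarrow> 'b \<Rightarrow> 'b) \<Rightarrow> (real \<Rightarrow> real \<Rightarrow> real) \<Rightarrow> ('b \<Rightarrow> real)
   \<Rightarrow> 'b \<Rightarrow> 'b \<Rightarrow> real" where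
  "orbit_kernel_off G \<phi> acc \<pi> x y =
     (if y \<in> orbit G \<phi> x \<and> y \<noteq> x
      then acc (\<pi> x) (\<pi> y) / (real (card (orbit G \<phi> x)) - 1) else 0)"

definition orbit_kernel ::
  "('g, 'm) monoid_scheme \<Rightarrow> ('g \<Rightarrow> 'b \<Rightarrow> 'b) \<Rightarrow> (real \<Rightarrow> real \<Rightarrow> real) \<Rightarrow> ('b \<Rightarrow> real)
   \<Rightarrow> 'b \<Rightarrow> 'b \<Rightarrow> real" where
  "orbit_kernel G \<phi> acc \<pi> x y =
     (if y = x then 1 - (\<Sum>z\<in>orbit G \<phi> x - {x}. orbit_kernel_off G \<phi> acc \<pi> x z)
      else orbit_kernel_off G \<phi> acc \<pi> x y)"

definition mh_orbit_kernel ::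
  "('g, 'm) monoid_scheme \<Rightarrow> ('g \<Rightarrow> 'b \<Rightarrow> 'b) \<Rightarrow> ('b \<Rightarrow> real) \<Rightarrow> 'b \<Rightarrow> 'b \<Rightarrow> real" where
  "mh_orbit_kernel G \<phi> \<pi> = orbit_kernel G \<phi> (\<lambda>px py. min 1 (py / px)) \<pi>"

definition barker_orbit_kernel ::
  "('g, 'm) monoid_scheme \<Rightarrow> ('g \<Rightarrow> 'b \<Rightarrow> 'b) \<Rightarrow> ('b \<Rightarrow> real) \<Rightarrow> 'b \<Rightarrow> 'b \<Rightarrow> real" where
  "barker_orbit_kernel G \<phi> \<pi> = orbit_kernel G \<phi> (\<lambda>px py. py / (px + py)) \<pi>"

fun kernel_pow :: "'b set \<Rightarrow> ('b \<Rightarrow> 'b \<Rightarrow> real) \<Rightarrow> nat \<Rightarrow> 'b \<Rightarrow> 'b \<Rightarrow> real" where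
  "kernel_pow X K 0 = (\<lambda>x y. if x = y then 1 else 0)"
| "kernel_pow X K (Suc n) = (\<lambda>x y. \<Sum>z\<in>X. kernel_pow X K n x z * K z y)"

definition det_2cycle_on :: "('b \<Rightarrow> 'b \<Rightarrow> real) \<Rightarrow> 'b set \<Rightarrow> bool" where
  "det_2cycle_on K Orb \<longleftrightarrow> card Orb = 2 \<and>
     (\<forall>x\<in>Orb. \<forall>y\<in>Orb. K x y = (if x = y then 0 else 1))"

end

theory Submission
  imports Defs
begin

(* Each of the kernels is block diagonal with respect to the orbits.  On an orbit O all
   off-diagonal entries are positive, and the kernel is reversible, hence stationary, for pi
   restricted to O and normalised, which is the row of the Gibbs kernel.  So the two-step
   kernel is strictly positive on O unless |O| = 2 and both diagonal entries vanish, i.e.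
   unless there is a deterministic 2-cycle; Barker's acceptance probability is always below 1,
   so its diagonal never vanishes.  A strictly positive power of a stochastic matrix contracts
   the l1-distance of every row to a stationary distribution by a fixed factor below 1
   (Doeblin's argument), so the powers converge to the Gibbs kernel. *)

definition stochastic_on :: "'b set \<Rightarrow> ('b \<Rightarrow> 'b \<Rightarrow> real) \<Rightarrow> bool" where
  "stochastic_on S K \<longleftrightarrow> (\<forall>x\<in>S. \<forall>y\<in>S. 0 \<le> K x y) \<and> (\<forall>x\<in>S. (\<Sum>y\<in>S. K x y) = 1)"

definition stationary_on :: "'b set \<Rightarrow> ('b \<Rightarrow> 'b \<Rightarrow> real) \<Rightarrow> ('b \<Rightarrow> real) \<Rightarrow> bool" where
  "stationary_on S K \<mu> \<longleftrightarrow> (\<forall>y\<in>S. (\<Sum>x\<in>S. \<mu> x * K x y) = \<mu> y)"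

lemma kernel_pow_2:
  assumes "finite S" "x \<in> S"
  shows "kernel_pow S K 2 x y = (\<Sum>z\<in>S. K x z * K z y)"
  using assms by (simp add: numeral_2_eq_2 if_distrib[where f = "\<lambda>a. a * _"] cong: if_cong)

lemma kernel_pow_add:
  assumes "finite S" "y \<in> S"
  shows "kernel_pow S K (i + j) x y = (\<Sum>z\<in>S. kernel_pow S K i x z * kernel_pow S K j z y)"
  using assms(2)
proof (induction j arbitrary: y)
  case 0
  then show ?case
    using assms(1) by (simp add: if_distrib[where f = "\<lambda>a. _ * a"] cong: if_cong)
next
  case (Suc j)
  have "kernel_pow S K (i + Suc j) x y
      = (\<Sum>w\<in>S. \<Sum>z\<in>S. kernel_pow S K i x z * kernel_pow S K j z w * K w y)"
    using Suc.IH by (simp add: sum_distrib_right)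
  also have "\<dots> = (\<Sum>z\<in>S. kernel_pow S K i x z * kernel_pow S K (Suc j) z y)"
    by (subst sum.swap) (simp add: sum_distrib_left mult.assoc)
  finally show ?case .
qed

lemma stochastic_on_kernel_pow:
  assumes "finite S" "stochastic_on S K"
  shows "stochastic_on S (kernel_pow S K i)"
proof (induction i)
  case 0
  then show ?case
    using assms(1) by (simp add: stochastic_on_def)
next
  case (Suc i)
  have "(\<Sum>y\<in>S. kernel_pow S K (Suc i) x y) = 1" if "x \<in> S" for x
  proof -
    have "(\<Sum>y\<in>S. kernel_pow S K (Suc i) x y) = (\<Sum>z\<in>S. kernel_pow S K i x z * (\<Sum>y\<in>S. K z y))"
      by (simp add: sum_distrib_left) (rule sum.swap)
    also have "\<dots> = 1"
      using Suc that assms(2) by (simp add: stochastic_on_def)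
    finally show ?thesis .
  qed
  moreover have "0 \<le> kernel_pow S K (Suc i) x y" if "x \<in> S" "y \<in> S" for x y
    using Suc that assms(2) by (auto simp: stochastic_on_def intro!: sum_nonneg)
  ultimately show ?case
    by (simp add: stochastic_on_def del: kernel_pow.simps)
qed

lemma stationary_on_kernel_pow:
  assumes "finite S" "stationary_on S K \<mu>"
  shows "stationary_on S (kernel_pow S K i) \<mu>"
  unfolding stationary_on_def
proof (induction i)
  case 0
  then show ?case
    using assms(1) by (simp add: if_distrib[where f = "\<lambda>a. _ * a"] cong: if_cong)
next
  case (Suc i)
  show ?case
  proof
    fix y assume "y \<in> S"
    have "(\<Sum>x\<in>S. \<mu> x * kernel_pow S K (Suc i) x y)
        = (\<Sum>z\<in>S. (\<Sum>x\<in>S. \<mu> x * kernel_pow S K i x z) * K z y)"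
      by (simp add: sum_distrib_left sum_distrib_right mult.assoc) (rule sum.swap)
    also have "\<dots> = \<mu> y"
      using Suc \<open>y \<in> S\<close> assms(2) by (simp add: stationary_on_def)
    finally show "(\<Sum>x\<in>S. \<mu> x * kernel_pow S K (Suc i) x y) = \<mu> y" .
  qed
qed

lemma stationary_on_if_reversible:
  assumes "stochastic_on S K" "\<And>x y. x \<in> S \<Longrightarrow> y \<in> S \<Longrightarrow> \<mu> x * K x y = \<mu> y * K y x"
  shows "stationary_on S K \<mu>"
  unfolding stationary_on_def
proof
  fix y assume "y \<in> S"
  then have "(\<Sum>x\<in>S. \<mu> x * K x y) = \<mu> y * (\<Sum>x\<in>S. K y x)"
    by (simp add: assms(2) sum_distrib_left)
  then show "(\<Sum>x\<in>S. \<mu> x * K x y) = \<mu> y"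
    using assms(1) \<open>y \<in> S\<close> by (simp add: stochastic_on_def)
qed

lemma kernel_pow_restrict_closed:
  assumes "finite S" "T \<subseteq> S" "x \<in> T" and closed: "\<And>z y. z \<in> T \<Longrightarrow> y \<notin> T \<Longrightarrow> K z y = 0"
  shows "kernel_pow S K i x y = (if y \<in> T then kernel_pow T K i x y else 0)"
proof (induction i arbitrary: y)
  case 0
  then show ?case
    using assms(3) by auto
next
  case (Suc i)
  have "kernel_pow S K (Suc i) x y = (\<Sum>z\<in>S. if z \<in> T then kernel_pow T K i x z * K z y else 0)"
    using Suc by (simp add: if_distrib[where f = "\<lambda>a. a * _"] cong: if_cong)
  also have "\<dots> = (\<Sum>z\<in>T. kernel_pow T K i x z * K z y)"
    using assms(1,2) by (simp add: sum.inter_restrict[symmetric] Int_absorb1)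
  finally show ?case
    using closed by simp
qed

lemma det_2cycle_on_if_zero_diagonal:
  assumes "stochastic_on S K" "card S = 2" "\<forall>u\<in>S. K u u = 0"
  shows "det_2cycle_on K S"
  unfolding det_2cycle_on_def
proof (intro conjI ballI assms(2))
  fix a b assume a: "a \<in> S" and b: "b \<in> S"
  show "K a b = (if a = b then 0 else 1)"
  proof (cases "a = b")
    case False
    have "finite S"
      using assms(2) card.infinite by fastforce
    moreover have "card {a, b} = card S"
      using False assms(2) by simp
    ultimately have "S = {a, b}"
      using a b card_subset_eq[of S "{a, b}"] by simp
    then have "K a a + K a b = 1"
      using assms(1) a False by (simp add: stochastic_on_def)
    then show ?thesis
      using assms(3) a False by simp
  qed (use assms(3) a in simp)
qed

lemma doeblin_contraction:
  fixes d :: "'b \<Rightarrow> real" and \<delta> :: real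
  assumes "finite S" "(\<Sum>z\<in>S. d z) = 0" "\<forall>z\<in>S. (\<Sum>w\<in>S. Q z w) = 1"
    and "\<forall>z\<in>S. \<forall>w\<in>S. \<delta> \<le> Q z w"
  shows "(\<Sum>w\<in>S. \<bar>\<Sum>z\<in>S. d z * Q z w\<bar>) \<le> (1 - card S * \<delta>) * (\<Sum>z\<in>S. \<bar>d z\<bar>)"
proof -
  \<comment> \<open>As d sums to 0, Q may be replaced by the entrywise nonnegative Q - \<delta>.\<close>
  have "(\<Sum>z\<in>S. d z * (Q z w - \<delta>)) = (\<Sum>z\<in>S. d z * Q z w)" for w
    using assms(2) by (simp add: right_diff_distrib sum_subtractf flip: sum_distrib_right)
  then have "(\<Sum>w\<in>S. \<bar>\<Sum>z\<in>S. d z * Q z w\<bar>) = (\<Sum>w\<in>S. \<bar>\<Sum>z\<in>S. d z * (Q z w - \<delta>)\<bar>)"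
    by simp
  also have "\<dots> \<le> (\<Sum>w\<in>S. \<Sum>z\<in>S. \<bar>d z\<bar> * (Q z w - \<delta>))"
    by (intro sum_mono order.trans[OF sum_abs] eq_refl sum.cong) (use assms(4) in \<open>auto simp: abs_mult\<close>)
  also have "\<dots> = (\<Sum>z\<in>S. \<bar>d z\<bar> * ((\<Sum>w\<in>S. Q z w) - card S * \<delta>))"
    by (subst sum.swap) (simp add: sum_distrib_left[symmetric] sum_subtractf)
  also have "\<dots> = (\<Sum>z\<in>S. (1 - card S * \<delta>) * \<bar>d z\<bar>)"
    using assms(3) by (simp add: mult.commute)
  also have "\<dots> = (1 - card S * \<delta>) * (\<Sum>z\<in>S. \<bar>d z\<bar>)"
    by (rule sum_distrib_left[symmetric])
  finally show ?thesis .
qed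

lemma LIMSEQ_zero_if_contracting_every:
  fixes N :: "nat \<Rightarrow> real"
  assumes "0 < m" "0 \<le> c" "c < 1" "\<And>i. 0 \<le> N i" "\<And>i. N i \<le> C" "\<And>i. N (i + m) \<le> c * N i"
  shows "N \<longlonglongrightarrow> 0"
proof -
  have "N (k * m + r) \<le> c ^ k * C" for k r
  proof (induction k)
    case (Suc k)
    have "N (Suc k * m + r) \<le> c * N (k * m + r)"
      using assms(6)[of "k * m + r"] by (simp add: add.commute add.left_commute)
    also have "\<dots> \<le> c ^ Suc k * C"
      using Suc assms(2) by (simp add: mult.assoc mult_left_mono)
    finally show ?case .
  qed (use assms(5) in simp)
  then have bound: "norm (N i) \<le> c ^ (i div m) * C" for i
    using assms(4)[of i] div_mult_mod_eq[of i m] by (metis real_norm_def abs_of_nonneg)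
  have "(\<lambda>i. c ^ (i div m) * C) \<longlonglongrightarrow> 0"
    by (intro tendsto_mult_left_zero filterlim_compose[OF LIMSEQ_power_zero
          filterlim_at_top_div_const_nat]) (use assms in simp_all)
  then show ?thesis
    by (rule Lim_null_comparison[OF always_eventually[OF allI[OF bound]]])
qed

lemma finite_pos_imp_uniform_lower_bound:
  fixes f :: "'a \<Rightarrow> real"
  assumes "finite A" "\<forall>a\<in>A. 0 < f a"
  obtains \<delta> where "0 < \<delta>" "\<forall>a\<in>A. \<delta> \<le> f a"
proof (cases "A = {}")
  case False
  then show ?thesis
    using that[of "Min (f ` A)"] assms by simp
qed (use that[of 1] in simp)

lemma kernel_pow_contraction:
  assumes fin: "finite S" and stoch: "stochastic_on S K" and stat: "stationary_on S K \<mu>"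
    and \<mu>_sum: "(\<Sum>y\<in>S. \<mu> y) = 1" and x: "x \<in> S"
    and primitive: "\<forall>z\<in>S. \<forall>w\<in>S. 0 < kernel_pow S K m z w"
  obtains c where "0 \<le> c" "c < 1"
    "\<And>i. (\<Sum>w\<in>S. \<bar>kernel_pow S K (i + m) x w - \<mu> w\<bar>)
       \<le> c * (\<Sum>w\<in>S. \<bar>kernel_pow S K i x w - \<mu> w\<bar>)"
proof -
  obtain \<delta> where \<delta>: "0 < \<delta>" "\<forall>z\<in>S. \<forall>w\<in>S. \<delta> \<le> kernel_pow S K m z w"
    using finite_pos_imp_uniform_lower_bound[of "S \<times> S" "\<lambda>(z, w). kernel_pow S K m z w"]
      fin primitive by auto
  have stoch_pow: "stochastic_on S (kernel_pow S K n)" for n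
    using stochastic_on_kernel_pow[OF fin stoch] .
  show ?thesis
  proof (rule that)
    have "(\<Sum>w\<in>S. \<delta>) \<le> (\<Sum>w\<in>S. kernel_pow S K m x w)"
      using \<delta>(2) x by (intro sum_mono) auto
    then show "0 \<le> 1 - card S * \<delta>"
      using stoch_pow x by (simp add: stochastic_on_def)
    have "0 < card S"
      using fin x by (auto simp: card_gt_0_iff)
    then show "1 - card S * \<delta> < 1"
      using \<delta>(1) by simp
    fix i
    have "kernel_pow S K (i + m) x w - \<mu> w
        = (\<Sum>z\<in>S. (kernel_pow S K i x z - \<mu> z) * kernel_pow S K m z w)" if "w \<in> S" for w
      using stationary_on_kernel_pow[OF fin stat, of m] that
      by (simp add: kernel_pow_add[OF fin that] left_diff_distrib sum_subtractf stationary_on_def)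
    then have "(\<Sum>w\<in>S. \<bar>kernel_pow S K (i + m) x w - \<mu> w\<bar>)
        = (\<Sum>w\<in>S. \<bar>\<Sum>z\<in>S. (kernel_pow S K i x z - \<mu> z) * kernel_pow S K m z w\<bar>)"
      by simp
    also have "\<dots> \<le> (1 - card S * \<delta>) * (\<Sum>w\<in>S. \<bar>kernel_pow S K i x w - \<mu> w\<bar>)"
      using fin x \<mu>_sum stoch_pow \<delta>(2)
      by (intro doeblin_contraction) (auto simp: sum_subtractf stochastic_on_def)
    finally show "(\<Sum>w\<in>S. \<bar>kernel_pow S K (i + m) x w - \<mu> w\<bar>)
        \<le> (1 - card S * \<delta>) * (\<Sum>w\<in>S. \<bar>kernel_pow S K i x w - \<mu> w\<bar>)" .
  qed
qed

theorem kernel_pow_tendsto_stationary: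
  assumes fin: "finite S" and stoch: "stochastic_on S K" and stat: "stationary_on S K \<mu>"
    and \<mu>_sum: "(\<Sum>y\<in>S. \<mu> y) = 1" and "0 < m"
    and primitive: "\<forall>z\<in>S. \<forall>w\<in>S. 0 < kernel_pow S K m z w"
    and x: "x \<in> S" and y: "y \<in> S"
  shows "(\<lambda>i. kernel_pow S K i x y) \<longlonglongrightarrow> \<mu> y"
proof -
  define N where "N i = (\<Sum>w\<in>S. \<bar>kernel_pow S K i x w - \<mu> w\<bar>)" for i
  obtain c where "0 \<le> c" "c < 1" and contract: "\<And>i. N (i + m) \<le> c * N i"
    using kernel_pow_contraction[OF fin stoch stat \<mu>_sum x primitive] unfolding N_def by blast
  have row: "(\<Sum>w\<in>S. kernel_pow S K i x w) = 1" "\<forall>w\<in>S. 0 \<le> kernel_pow S K i x w" for i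
    using stochastic_on_kernel_pow[OF fin stoch] x by (simp_all add: stochastic_on_def)
  have N_nonneg: "0 \<le> N i" for i
    unfolding N_def by (simp add: sum_nonneg)
  have "N i \<le> (\<Sum>w\<in>S. kernel_pow S K i x w + \<bar>\<mu> w\<bar>)" for i
    unfolding N_def using row(2) by (intro sum_mono order.trans[OF abs_triangle_ineq4]) simp
  then have N_bounded: "N i \<le> 1 + (\<Sum>w\<in>S. \<bar>\<mu> w\<bar>)" for i
    by (simp add: sum.distrib row(1))
  have N_tendsto: "N \<longlonglongrightarrow> 0"
    by (rule LIMSEQ_zero_if_contracting_every[of m c N, OF \<open>0 < m\<close> \<open>0 \<le> c\<close> \<open>c < 1\<close>
          N_nonneg N_bounded contract])
  have "norm (kernel_pow S K i x y - \<mu> y) \<le> N i" for i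
    unfolding N_def real_norm_def by (rule member_le_sum[OF y _ fin]) simp
  then have "(\<lambda>i. kernel_pow S K i x y - \<mu> y) \<longlonglongrightarrow> 0"
    by (intro Lim_null_comparison[OF always_eventually N_tendsto] allI)
  then show ?thesis
    by (rule LIM_zero_cancel)
qed

lemma (in group_action) orbit_subset: "x \<in> E \<Longrightarrow> orbit G \<phi> x \<subseteq> E"
  unfolding orbit_def using element_image by blast

lemma (in group_action) orbit_eq_if_mem:
  assumes "x \<in> E" "y \<in> orbit G \<phi> x"
  shows "orbit G \<phi> y = orbit G \<phi> x"
proof -
  have "y \<in> E"
    using assms orbit_subset by blast
  moreover have "x \<in> orbit G \<phi> y"
    using assms(1) \<open>y \<in> E\<close> assms(2) by (rule orbit_sym)
  ultimately show ?thesis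
    using assms orbit_subset orbit_trans by blast
qed

locale orbit_chain = group_action G X \<phi>
  for G :: "('g, 'm) monoid_scheme" (structure) and X :: "'b set" and \<phi> :: "'g \<Rightarrow> 'b \<Rightarrow> 'b" +
  fixes \<pi> :: "'b \<Rightarrow> real" and acc :: "real \<Rightarrow> real \<Rightarrow> real"
  assumes finite_X: "finite X"
    and \<pi>_pos: "\<And>x. x \<in> X \<Longrightarrow> 0 < \<pi> x"
    and acc_pos: "\<And>a b. 0 < a \<Longrightarrow> 0 < b \<Longrightarrow> 0 < acc a b"
    and acc_le_1: "\<And>a b. 0 < a \<Longrightarrow> 0 < b \<Longrightarrow> acc a b \<le> 1"
    and acc_reversible: "\<And>a b. 0 < a \<Longrightarrow> 0 < b \<Longrightarrow> a * acc a b = b * acc b a"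
begin

abbreviation "Orb \<equiv> orbit G \<phi>"
abbreviation "P \<equiv> orbit_kernel G \<phi> acc \<pi>"

lemma finite_orbit: "x \<in> X \<Longrightarrow> finite (Orb x)"
  using orbit_subset finite_X finite_subset by blast

lemma orbit_member:
  assumes "x \<in> X" "z \<in> Orb x"
  shows "z \<in> X" "Orb z = Orb x"
  using assms orbit_subset orbit_eq_if_mem by blast+

lemma card_orbit_minus_self:
  assumes "z \<in> X"
  shows "real (card (Orb z - {z})) = real (card (Orb z)) - 1"
proof -
  have "0 < card (Orb z)"
    using assms finite_orbit orbit_refl card_gt_0_iff by blast
  then show ?thesis
    using assms orbit_refl by (simp add: of_nat_diff)
qed

lemma orbit_kernel_outside_orbit: "z \<in> X \<Longrightarrow> y \<notin> Orb z \<Longrightarrow> P z y = 0"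
  using orbit_refl by (auto simp: orbit_kernel_def orbit_kernel_off_def)

lemma orbit_kernel_off_diag:
  "y \<in> Orb z \<Longrightarrow> y \<noteq> z \<Longrightarrow> P z y = acc (\<pi> z) (\<pi> y) / (real (card (Orb z)) - 1)"
  by (simp add: orbit_kernel_def orbit_kernel_off_def)

lemma orbit_kernel_diag:
  "z \<in> X \<Longrightarrow> P z z = 1 - (\<Sum>y\<in>Orb z - {z}. acc (\<pi> z) (\<pi> y)) / card (Orb z - {z})"
  by (simp add: orbit_kernel_def orbit_kernel_off_def sum_divide_distrib card_orbit_minus_self)

lemma orbit_kernel_off_diag_pos:
  assumes "z \<in> X" "y \<in> Orb z" "y \<noteq> z"
  shows "0 < P z y"
proof -
  have "card {z, y} \<le> card (Orb z)"
    using assms finite_orbit orbit_refl by (intro card_mono) auto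
  then have "1 < real (card (Orb z))"
    using assms(3) by simp
  moreover have "0 < acc (\<pi> z) (\<pi> y)"
    using assms orbit_subset by (intro acc_pos \<pi>_pos) auto
  ultimately show ?thesis
    using assms by (simp add: orbit_kernel_off_diag)
qed

lemma orbit_kernel_diag_nonneg:
  assumes "z \<in> X"
  shows "0 \<le> P z z"
proof -
  have "(\<Sum>y\<in>Orb z - {z}. acc (\<pi> z) (\<pi> y)) \<le> (\<Sum>y\<in>Orb z - {z}. 1)"
    using assms orbit_subset by (intro sum_mono acc_le_1 \<pi>_pos) auto
  then show ?thesis
    using assms by (auto simp: orbit_kernel_diag divide_le_eq_1)
qed

lemma orbit_kernel_diag_pos_if_acc_less_1:
  assumes acc_less_1: "\<And>a b. 0 < a \<Longrightarrow> 0 < b \<Longrightarrow> acc a b < 1" and "z \<in> X"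
  shows "0 < P z z"
proof (cases "Orb z - {z} = {}")
  case False
  have "(\<Sum>y\<in>Orb z - {z}. acc (\<pi> z) (\<pi> y)) < (\<Sum>y\<in>Orb z - {z}. 1)"
    using assms orbit_subset finite_orbit False by (intro sum_strict_mono acc_less_1 \<pi>_pos) auto
  then show ?thesis
    using assms by (auto simp: orbit_kernel_diag divide_less_eq_1)
next
  case True
  then show ?thesis
    unfolding orbit_kernel_diag[OF assms(2)] True by simp
qed

lemma orbit_kernel_row_sum:
  assumes "z \<in> X"
  shows "(\<Sum>y\<in>Orb z. P z y) = 1"
proof -
  have "(\<Sum>y\<in>Orb z - {z}. P z y) = (\<Sum>y\<in>Orb z - {z}. orbit_kernel_off G \<phi> acc \<pi> z y)"
    by (intro sum.cong) (auto simp: orbit_kernel_def)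
  then show ?thesis
    using sum.remove[OF finite_orbit[OF assms] orbit_refl[OF assms], of "P z"]
    by (simp add: orbit_kernel_def[of _ _ _ _ z z])
qed

lemma orbit_kernel_reversible:
  assumes "z \<in> X" "y \<in> Orb z"
  shows "\<pi> z * P z y = \<pi> y * P y z"
proof (cases "y = z")
  case False
  have "y \<in> X" "Orb y = Orb z"
    using orbit_member[OF assms] .
  moreover have "z \<in> Orb y"
    using orbit_refl[OF assms(1)] \<open>Orb y = Orb z\<close> by simp
  moreover have "\<pi> z * acc (\<pi> z) (\<pi> y) = \<pi> y * acc (\<pi> y) (\<pi> z)"
    using assms \<open>y \<in> X\<close> by (intro acc_reversible \<pi>_pos)
  ultimately show ?thesis
    using assms False by (simp add: orbit_kernel_off_diag)
qed simp

lemma stochastic_on_orbit: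
  assumes "x \<in> X"
  shows "stochastic_on (Orb x) P"
  unfolding stochastic_on_def
proof (intro conjI ballI)
  fix z assume "z \<in> Orb x"
  note z = orbit_member[OF assms this]
  then show "(\<Sum>y\<in>Orb x. P z y) = 1"
    using orbit_kernel_row_sum[OF z(1)] z(2) by simp
  fix y assume "y \<in> Orb x"
  then show "0 \<le> P z y"
    using z orbit_kernel_off_diag_pos[of z y] orbit_kernel_diag_nonneg[of z]
    by (cases "y = z") auto
qed

lemma sum_gibbs_orbit_kernel:
  assumes "x \<in> X"
  shows "(\<Sum>y\<in>Orb x. gibbs_orbit_kernel G \<phi> \<pi> x y) = 1"
proof -
  have "0 < (\<Sum>y\<in>Orb x. \<pi> y)"
    using assms finite_orbit orbit_refl[OF assms] orbit_subset by (intro sum_pos \<pi>_pos) auto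
  then show ?thesis
    by (simp add: gibbs_orbit_kernel_def flip: sum_divide_distrib)
qed

lemma stationary_on_orbit:
  assumes "x \<in> X"
  shows "stationary_on (Orb x) P (gibbs_orbit_kernel G \<phi> \<pi> x)"
proof (rule stationary_on_if_reversible[OF stochastic_on_orbit[OF assms]])
  fix z y assume "z \<in> Orb x" "y \<in> Orb x"
  then have "\<pi> z * P z y = \<pi> y * P y z"
    using orbit_member[OF assms] by (intro orbit_kernel_reversible) auto
  then show "gibbs_orbit_kernel G \<phi> \<pi> x z * P z y = gibbs_orbit_kernel G \<phi> \<pi> x y * P y z"
    using \<open>z \<in> Orb x\<close> \<open>y \<in> Orb x\<close> by (simp add: gibbs_orbit_kernel_def)
qed

lemma orbit_two_step_path:
  assumes x: "x \<in> X" and aperiodic: "card (Orb x) = 2 \<Longrightarrow> \<exists>u\<in>Orb x. 0 < P u u"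
    and z: "z \<in> Orb x" and y: "y \<in> Orb x"
  shows "\<exists>w\<in>Orb x. 0 < P z w * P w y"
proof -
  have pos: "0 < P u v" if "u \<in> Orb x" "v \<in> Orb x" "v \<noteq> u" for u v
    using that orbit_member[OF x that(1)] by (intro orbit_kernel_off_diag_pos) auto
  show ?thesis
  proof (cases "\<exists>w\<in>Orb x. w \<noteq> z \<and> w \<noteq> y")
    case True
    then obtain w where "w \<in> Orb x" "w \<noteq> z" "w \<noteq> y"
      by blast
    then show ?thesis
      using pos[of z w] pos[of w y] z y by (intro bexI[of _ w] mult_pos_pos) auto
  next
    case False
    then have orb: "Orb x = {z, y}"
      using z y by blast
    show ?thesis
    proof (cases "z = y")
      case True
      have no_neighbour: "Orb z - {z} = {}"
        using True orb orbit_member[OF x z] by simp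
      have "P z z = 1"
        unfolding orbit_kernel_diag[OF orbit_member(1)[OF x z]] no_neighbour by simp
      then show ?thesis
        using True z by (intro bexI[of _ z]) auto
    next
      case False
      then obtain u where "u \<in> {z, y}" "0 < P u u"
        using aperiodic orb by auto
      then show ?thesis
        using pos[OF z y] False z y by (auto intro: mult_pos_pos)
    qed
  qed
qed

lemma kernel_pow_2_orbit_pos:
  assumes x: "x \<in> X" and aperiodic: "card (Orb x) = 2 \<Longrightarrow> \<exists>u\<in>Orb x. 0 < P u u"
    and z: "z \<in> Orb x" and y: "y \<in> Orb x"
  shows "0 < kernel_pow (Orb x) P 2 z y"
proof -
  obtain w where "w \<in> Orb x" "0 < P z w * P w y"
    using orbit_two_step_path[OF assms] ..
  moreover have "P z w * P w y \<le> (\<Sum>v\<in>Orb x. P z v * P v y)"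
    using stochastic_on_orbit[OF x] finite_orbit[OF x] z y \<open>w \<in> Orb x\<close>
    by (intro member_le_sum mult_nonneg_nonneg) (auto simp: stochastic_on_def)
  ultimately show ?thesis
    using kernel_pow_2[OF finite_orbit[OF x] z] by simp
qed

lemma kernel_pow_tendsto_gibbs:
  assumes x: "x \<in> X" and "y \<in> X" and aperiodic: "card (Orb x) = 2 \<Longrightarrow> \<exists>u\<in>Orb x. 0 < P u u"
  shows "(\<lambda>i. kernel_pow X P i x y) \<longlonglongrightarrow> gibbs_orbit_kernel G \<phi> \<pi> x y"
proof -
  have closed: "P z w = 0" if "z \<in> Orb x" "w \<notin> Orb x" for z w
    using that orbit_member[OF x that(1)] by (intro orbit_kernel_outside_orbit) auto
  have restrict: "kernel_pow X P i x y = (if y \<in> Orb x then kernel_pow (Orb x) P i x y else 0)" for i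
    by (rule kernel_pow_restrict_closed[OF finite_X orbit_subset[OF x] orbit_refl[OF x] closed])
  show ?thesis
  proof (cases "y \<in> Orb x")
    case True
    have "(\<lambda>i. kernel_pow (Orb x) P i x y) \<longlonglongrightarrow> gibbs_orbit_kernel G \<phi> \<pi> x y"
      using kernel_pow_2_orbit_pos[OF x aperiodic]
      by (intro kernel_pow_tendsto_stationary[where m = 2, OF finite_orbit[OF x] stochastic_on_orbit[OF x]
            stationary_on_orbit[OF x] sum_gibbs_orbit_kernel[OF x] _ _ orbit_refl[OF x] True]) auto
    then show ?thesis
      using True by (simp add: restrict)
  qed (simp add: restrict gibbs_orbit_kernel_def)
qed

lemma kernel_pow_tendsto_gibbs_if_no_det_2cycle:
  assumes "\<not> det_2cycle_on P (Orb x)" "x \<in> X" "y \<in> X"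
  shows "(\<lambda>i. kernel_pow X P i x y) \<longlonglongrightarrow> gibbs_orbit_kernel G \<phi> \<pi> x y"
proof (rule kernel_pow_tendsto_gibbs[OF assms(2,3)])
  assume "card (Orb x) = 2"
  then have "\<exists>u\<in>Orb x. P u u \<noteq> 0"
    using assms(1) det_2cycle_on_if_zero_diagonal[OF stochastic_on_orbit[OF assms(2)]] by blast
  then show "\<exists>u\<in>Orb x. 0 < P u u"
    using stochastic_on_orbit[OF assms(2)] by (force simp: stochastic_on_def)
qed

lemma kernel_pow_tendsto_gibbs_if_acc_less_1:
  assumes "\<And>a b. 0 < a \<Longrightarrow> 0 < b \<Longrightarrow> acc a b < 1" "x \<in> X" "y \<in> X"
  shows "(\<lambda>i. kernel_pow X P i x y) \<longlonglongrightarrow> gibbs_orbit_kernel G \<phi> \<pi> x y"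
proof (rule kernel_pow_tendsto_gibbs[OF assms(2,3)])
  show "\<exists>u\<in>Orb x. 0 < P u u"
    using orbit_refl[OF assms(2)] orbit_kernel_diag_pos_if_acc_less_1[OF assms(1,2)] by blast
qed

end

theorem proposition2p3:
  fixes G :: "('g, 'm) monoid_scheme" (structure)
    and \<phi> :: "'g \<Rightarrow> 'b \<Rightarrow> 'b" and X :: "'b set" and \<pi> :: "'b \<Rightarrow> real"
  assumes "group G"
    and "group_action G X \<phi>"
    and "finite X"
    and "\<forall>x\<in>X. \<pi> x > 0"
    and "(\<Sum>x\<in>X. \<pi> x) = 1"
  shows "((\<forall>x\<in>X. \<not> det_2cycle_on (mh_orbit_kernel G \<phi> \<pi>) (orbit G \<phi> x)) \<longrightarrow>
           (\<forall>x\<in>X. \<forall>y\<in>X. (\<lambda>i. kernel_pow X (mh_orbit_kernel G \<phi> \<pi>) i x y)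
              \<longlonglongrightarrow> gibbs_orbit_kernel G \<phi> \<pi> x y))
       \<and> (\<forall>x\<in>X. \<forall>y\<in>X. (\<lambda>i. kernel_pow X (barker_orbit_kernel G \<phi> \<pi>) i x y)
              \<longlonglongrightarrow> gibbs_orbit_kernel G \<phi> \<pi> x y)"
proof
  interpret MH: orbit_chain G X \<phi> \<pi> "\<lambda>px py. min 1 (py / px)"
    by (intro orbit_chain.intro orbit_chain_axioms.intro) (use assms in \<open>auto simp: min_def field_simps\<close>)
  show "(\<forall>x\<in>X. \<not> det_2cycle_on (mh_orbit_kernel G \<phi> \<pi>) (orbit G \<phi> x)) \<longrightarrow>
      (\<forall>x\<in>X. \<forall>y\<in>X. (\<lambda>i. kernel_pow X (mh_orbit_kernel G \<phi> \<pi>) i x y)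
         \<longlonglongrightarrow> gibbs_orbit_kernel G \<phi> \<pi> x y)"
    unfolding mh_orbit_kernel_def using MH.kernel_pow_tendsto_gibbs_if_no_det_2cycle by blast
next
  interpret Barker: orbit_chain G X \<phi> \<pi> "\<lambda>px py. py / (px + py)"
    by (intro orbit_chain.intro orbit_chain_axioms.intro) (use assms in \<open>auto simp: field_simps\<close>)
  show "\<forall>x\<in>X. \<forall>y\<in>X. (\<lambda>i. kernel_pow X (barker_orbit_kernel G \<phi> \<pi>) i x y)
      \<longlonglongrightarrow> gibbs_orbit_kernel G \<phi> \<pi> x y"
    unfolding barker_orbit_kernel_def using Barker.kernel_pow_tendsto_gibbs_if_acc_less_1 by simp
qed

end
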